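(* Let $v\in\mathbb{C}$. For real $n>0$ with $\mathrm{Re}(n+v)>-1$ define \[ \theta_n(v)=1+n\int_0^1 e^{n(1-z)}z^{n+v}\,dz-\frac{e^n}{2n^{n+v}}\Gamma(n+v+1). \] Then for every integer $R\geq1$, as $n\to\infty$, \[ \theta_n(v)=\rho_0(v)+\frac{\rho_1(v)}{n}+\cdots+\frac{\rho_{R-1}(v)}{n^{R-1}}+O\!\left(\frac{1}{n^R}\right), \] with an implied constant depending only on $R$ and $v$, where \[ \rho_r(v)=\delta_{r,0}-\sum_{m=0}^{2r+1}(-1)^m\binom{v}{2r+1-m}\sum_{k=0}^{m}\frac{(2r+2k)!!}{(-1)^k\,k!}\,\mathcal{A}_{m,k}\!\left(\tfrac13,\tfrac14,\tfrac15,\dots\right). \]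
   Context: For integers $n$ and $k\geq 0$ and a sequence $a_1,a_2,\dots$, the De Moivre polynomial $\mathcal{A}_{n,k}(a_1,a_2,\dots)$ is the coefficient of $x^n$ in $(a_1x+a_2x^2+a_3x^3+\cdots)^k$ (so $\mathcal{A}_{0,0}=1$, $\mathcal{A}_{n,k}=0$ for $n<k$). The double factorial: $n!!=n(n-2)\cdots$ down to $1$ or $2$ for $n\geq1$, with $0!!=(-1)!!=1$. $\binom{v}{j}=v(v-1)\cdots(v-j+1)/j!$ for complex $v$, and $\delta_{r,0}$ is the Kronecker delta. $n^{n+v}=e^{(n+v)\log n}$. For integers $n\geq1$ and $v$ with $n+v\geq 0$, $\theta_n(v)$ coincides with the number defined by $\sum_{j=0}^{n+v-1}\frac{n^j}{j!}+\frac{n^{n+v}}{(n+v)!}\theta_n(v)=\frac{e^n}{2}$. *)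

theory Defs
  imports "HOL-Analysis.Analysis" "HOL-Computational_Algebra.Formal_Power_Series"
    "HOL-Library.Landau_Symbols"
begin

fun dfact :: "nat \<Rightarrow> nat" where
  "dfact 0 = 1"
| "dfact (Suc 0) = 1"
| "dfact (Suc (Suc n)) = Suc (Suc n) * dfact n"

text \<open>De Moivre polynomial: coefficient of x^n in (a_1 x + a_2 x^2 + ...)^k.
  The sequence a is indexed from 1; the value a 0 is ignored.\<close>
definition deMoivre :: "nat \<Rightarrow> nat \<Rightarrow> (nat \<Rightarrow> 'a::comm_ring_1) \<Rightarrow> 'a" where
  "deMoivre n k a = fps_nth ((Abs_fps (\<lambda>j. if j = 0 then 0 else a j)) ^ k) n"

definition theta :: "real \<Rightarrow> complex \<Rightarrow> complex" where
  "theta n v = 1 + of_real n * integral {0..1::real}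
        (\<lambda>z. of_real (exp (n * (1 - z))) * (of_real z) powr (of_real n + v))
     - of_real (exp n) / (2 * exp ((of_real n + v) * of_real (ln n))) * Gamma (of_real n + v + 1)"

definition rho :: "nat \<Rightarrow> complex \<Rightarrow> complex" where
  "rho r v = (if r = 0 then 1 else 0)
     - (\<Sum>m = 0..2*r+1. (-1)^m * (v gchoose (2*r+1-m)) *
          (\<Sum>k = 0..m. of_nat (dfact (2*r+2*k)) / ((-1)^k * of_nat (fact k)) *
                 deMoivre m k (\<lambda>j. 1 / of_nat (j + 2))))"

end

(* Substituting t = n s, the Gamma term of theta is (n/2) times the integral of
   g(s) = exp (n (1 - s)) s^(n+v) over [0, oo[, so theta = 1 + (n/2) (int_0^1 g - int_1^oo g).
   Away from the peak s = 1 both integrals are exponentially small.  Near it, with s = 1 + u,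
   g = exp (-n u^2 / 2) exp (n q(u)) (1 + u)^v where q(u) = ln (1 + u) - u + u^2 / 2 = O(u^3).
   Expanding exp (n q) and the power series of q^k (1 + u)^v, only the odd powers u^(2j+1) survive in
   int_0^delta (g(1 - t) - g(1 + t)) dt, and integrated against the Gaussian they give j! 2^j / n^(j+1).
   Since q(u) = -u^2 S(-u) with S(x) = x/3 + x^2/4 + ..., the coefficient of n^(-r) is a sum of
   De Moivre polynomials A_(m,k)(1/3, 1/4, ...) with the factors (2r+2k)!! = 2^(r+k) (r+k)!, i.e. rho_r(v). *)

theory Submission
  imports Defs "HOL-Analysis.FPS_Convergence" "HOL-Real_Asymp.Real_Asymp"
begin

section \<open>The coefficients \<open>\<rho>\<^sub>r\<close>\<close>

lemma dfact_even: "dfact (2*n) = 2^n * fact n"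
  by (induction n) (auto simp: mult_2 [symmetric] fact_Suc algebra_simps)

lemma deMoivre_eq_0_if_less:
  assumes "m < k"
  shows "deMoivre m k a = 0"
proof -
  have "Abs_fps (\<lambda>j. if j = 0 then 0 else a j) = fps_X * Abs_fps (\<lambda>j. a (Suc j))"
    by (rule fps_ext) (simp add: fps_X_mult_nth)
  then show ?thesis
    using assms by (simp add: deMoivre_def power_mult_distrib fps_X_power_mult_nth)
qed

definition deMoivre_fps :: "complex fps" where
  "deMoivre_fps = Abs_fps (\<lambda>j. if j = 0 then 0 else 1 / of_nat (j + 2))"

lemma deMoivre_fps_power_nth: "deMoivre m k (\<lambda>j. 1 / of_nat (j + 2)) = fps_nth (deMoivre_fps ^ k) m"
  unfolding deMoivre_def deMoivre_fps_def by (rule refl)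

definition log_remainder_fps :: "complex fps" where
  "log_remainder_fps = Abs_fps (\<lambda>j. if j < 3 then 0 else - ((-1)^j) / of_nat j)"

lemma log_remainder_fps_eq: "log_remainder_fps = - (fps_X^2 * (deMoivre_fps oo - fps_X))"
proof (rule fps_ext)
  fix i
  show "fps_nth log_remainder_fps i = fps_nth (- (fps_X^2 * (deMoivre_fps oo - fps_X))) i"
  proof (cases "i < 3")
    case True
    then have "i = 0 \<or> i = 1 \<or> i = 2" by auto
    then show ?thesis
      by (auto simp: log_remainder_fps_def deMoivre_fps_def fps_X_power_mult_nth fps_compose_uminus')
  next
    case False
    define j where "j = i - 2"
    have "i = j + 2" "j \<noteq> 0" using False by (auto simp: j_def)
    then show ?thesis
      by (simp add: log_remainder_fps_def deMoivre_fps_def fps_X_power_mult_nth fps_compose_uminus' power_add)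
  qed
qed

lemma log_remainder_fps_power:
  "log_remainder_fps ^ k = fps_const ((-1) ^ k) * (fps_X ^ (2*k) * (deMoivre_fps ^ k oo - fps_X))"
proof -
  have "log_remainder_fps = fps_const (-1) * (fps_X^2 * (deMoivre_fps oo - fps_X))"
    by (simp add: log_remainder_fps_eq flip: fps_const_neg)
  from this[THEN arg_cong[where f = "\<lambda>x. x ^ k"]]
  have "log_remainder_fps ^ k = fps_const (-1) ^ k * ((fps_X^2) ^ k * (deMoivre_fps oo - fps_X) ^ k)"
    by (simp only: power_mult_distrib)
  also have "\<dots> = fps_const ((-1) ^ k) * (fps_X ^ (2*k) * (deMoivre_fps ^ k oo - fps_X))"
    by (simp add: fps_const_power power_mult fps_compose_power)
  finally show ?thesis .
qed

definition peak_fps :: "complex \<Rightarrow> nat \<Rightarrow> complex fps" where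
  "peak_fps v k = log_remainder_fps ^ k * fps_binomial v"

lemma peak_fps_nth:
  "fps_nth (peak_fps v k) i =
     (if i < 2*k then 0
      else (-1)^k * (\<Sum>m=0..i-2*k. (-1)^m * deMoivre m k (\<lambda>j. 1 / of_nat (j + 2)) *
                                     (v gchoose (i - 2*k - m))))"
proof -
  have "peak_fps v k =
      fps_const ((-1)^k) * (fps_X^(2*k) * ((deMoivre_fps^k oo - fps_X) * fps_binomial v))"
    by (simp add: peak_fps_def log_remainder_fps_power mult.assoc)
  then have "fps_nth (peak_fps v k) i = (-1)^k *
      (if i < 2*k then 0 else fps_nth ((deMoivre_fps^k oo - fps_X) * fps_binomial v) (i - 2*k))"
    by (simp add: fps_X_power_mult_nth)
  then show ?thesis
    unfolding deMoivre_fps_power_nth by (simp add: fps_mult_nth fps_compose_uminus' mult.assoc)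
qed

(* Since (n/2) * int_0^oo 2 t^(2j+1) exp (-n t^2 / 2) dt = j! 2^j / n^j, the monomial u^(2j+1) of
   n^k / k! * q(u)^k (1 + u)^v, with q = log_remainder, contributes -peak_coeff v k j * n^(k-j) to theta. *)
definition peak_coeff :: "complex \<Rightarrow> nat \<Rightarrow> nat \<Rightarrow> complex" where
  "peak_coeff v k j = fps_nth (peak_fps v k) (2*j+1) * fact j * 2^j / fact k"

lemma peak_coeff_eq_0: "j < k \<Longrightarrow> peak_coeff v k j = 0"
  by (simp add: peak_coeff_def peak_fps_nth)

lemma rho_eq_sum_peak_coeff:
  assumes "2*r+2 \<le> K"
  shows "rho r v = (if r = 0 then 1 else 0) - (\<Sum>k<K. peak_coeff v k (k + r))"
proof -
  define A where "A m k = (deMoivre m k (\<lambda>j. 1 / of_nat (j + 2)) :: complex)" for m k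
  define F where "F m k = (-1)^m * (v gchoose (2*r+1-m)) *
      (of_nat (dfact (2*r+2*k)) / ((-1)^k * of_nat (fact k)) * A m k)" for m k
  have peak_coeff_eq: "peak_coeff v k (k + r) = (\<Sum>m=0..2*r+1. F m k)" for k
  proof -
    have dfact: "of_nat (dfact (2*r+2*k)) = (2::complex)^(k+r) * fact (k+r)"
      using dfact_even[of "r+k"] by (simp add: algebra_simps)
    have sign: "(-1::complex)^k * (-1)^k = 1"
      by (simp add: power_add [symmetric] mult_2 [symmetric])
    have "peak_coeff v k (k + r) =
        (\<Sum>m=0..2*r+1. (-1)^k * ((-1)^m * A m k * (v gchoose (2*r+1-m)))) * fact (k+r) * 2^(k+r) / fact k"
      by (simp add: peak_coeff_def peak_fps_nth A_def sum_distrib_left algebra_simps)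
    also have "\<dots> = (\<Sum>m=0..2*r+1. F m k)"
      unfolding sum_distrib_right sum_divide_distrib
      by (intro sum.cong refl) (simp only: F_def dfact, simp add: sign field_simps)
    finally show ?thesis .
  qed
  have "(\<Sum>k<K. peak_coeff v k (k + r)) = (\<Sum>m=0..2*r+1. \<Sum>k<K. F m k)"
    by (simp add: peak_coeff_eq sum.swap[of _ "{..<K}"])
  also have "\<dots> = (\<Sum>m=0..2*r+1. \<Sum>k=0..m. F m k)"
  proof (rule sum.cong[OF refl])
    fix m assume "m \<in> {0..2*r+1}"
    with assms show "(\<Sum>k<K. F m k) = (\<Sum>k=0..m. F m k)"
      by (intro sum.mono_neutral_right) (auto simp: F_def A_def deMoivre_eq_0_if_less)
  qed
  finally show ?thesis
    by (simp add: rho_def F_def A_def sum_distrib_left)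
qed

section \<open>Odd Gaussian moments\<close>

definition poisson_cdf :: "nat \<Rightarrow> real \<Rightarrow> real" where
  "poisson_cdf j x = exp (-x) * (\<Sum>i\<le>j. x^i / fact i)"

lemma poisson_cdf_0 [simp]: "poisson_cdf j 0 = 1"
  unfolding poisson_cdf_def by (induction j) auto

lemma has_real_derivative_poisson_cdf:
  "(poisson_cdf j has_real_derivative - (exp (-x) * x^j / fact j)) (at x)"
proof (induction j)
  case 0
  show ?case unfolding poisson_cdf_def by (auto intro!: derivative_eq_intros)
next
  case (Suc j)
  have eq: "poisson_cdf (Suc j) = (\<lambda>x. poisson_cdf j x + exp (-x) * (x^Suc j / fact (Suc j)))"
    by (auto simp: poisson_cdf_def algebra_simps)
  have "((\<lambda>x. exp (-x)) has_real_derivative - exp (-x)) (at x)"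
    by (auto intro!: derivative_eq_intros)
  moreover have "((\<lambda>x. x^Suc j / fact (Suc j)) has_real_derivative x^j / fact j) (at x)"
    using DERIV_cdivide[OF DERIV_pow[of "Suc j"], of "fact (Suc j)"] by (simp add: fact_Suc)
  ultimately have "((\<lambda>x. exp (-x) * (x^Suc j / fact (Suc j))) has_real_derivative
      exp (-x) * x^j / fact j - exp (-x) * x^Suc j / fact (Suc j)) (at x)"
    by (rule DERIV_mult[THEN DERIV_cong]) (simp add: algebra_simps)
  from DERIV_add[OF Suc.IH this] show ?case
    unfolding eq by (simp add: algebra_simps)
qed

lemma poisson_cdf_nonneg: "x \<ge> 0 \<Longrightarrow> poisson_cdf j x \<ge> 0"
  by (simp add: poisson_cdf_def sum_nonneg)

lemma poisson_cdf_le: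
  assumes "x \<ge> 0"
  shows "poisson_cdf j x \<le> (real j + 1) * (1 + x)^j * exp (-x)"
proof -
  have "x^i / fact i \<le> (1 + x)^j" if "i \<le> j" for i
  proof -
    have "x^i / fact i \<le> x^i" using assms by (simp add: divide_le_eq fact_ge_1 mult_le_cancel_left1)
    also have "\<dots> \<le> (1 + x)^i" using assms by (intro power_mono) auto
    also have "\<dots> \<le> (1 + x)^j" using assms that by (intro power_increasing) auto
    finally show ?thesis .
  qed
  then have "(\<Sum>i\<le>j. x^i / fact i) \<le> (\<Sum>i\<le>j. (1 + x)^j)"
    by (intro sum_mono) auto
  also have "\<dots> = (real j + 1) * (1 + x)^j"
    by simp
  finally show ?thesis
    unfolding poisson_cdf_def by (simp add: mult.commute mult_left_mono)
qed

lemma has_integral_gauss_odd_moment: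
  fixes a b :: real
  assumes "a > 0" "b \<ge> 0"
  shows "((\<lambda>t. t^(2*j+1) * exp (-a*t^2)) has_integral
           fact j / (2 * a^(j+1)) * (1 - poisson_cdf j (a*b^2))) {0..b}"
proof -
  define F where "F t = - fact j / (2 * a^(j+1)) * poisson_cdf j (a*t^2)" for t
  have "(F has_real_derivative t^(2*j+1) * exp (-a*t^2)) (at t)" for t
  proof -
    have "(F has_real_derivative
        - fact j / (2 * a^(j+1)) * (- (exp (-(a*t^2)) * (a*t^2)^j / fact j) * (2*a*t))) (at t)"
      unfolding F_def
      by (auto intro!: derivative_eq_intros DERIV_chain2[OF has_real_derivative_poisson_cdf])
    also have "- fact j / (2 * a^(j+1)) * (- (exp (-(a*t^2)) * (a*t^2)^j / fact j) * (2*a*t)) =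
        t^(2*j+1) * exp (-a*t^2)"
      using assms by (simp add: field_simps power_mult_distrib power_add flip: power_mult)
    finally show ?thesis .
  qed
  then have "((\<lambda>t. t^(2*j+1) * exp (-a*t^2)) has_integral (F b - F 0)) {0..b}"
    using assms by (intro fundamental_theorem_of_calculus)
      (auto simp: has_real_derivative_iff_has_vector_derivative [symmetric] intro: DERIV_subset)
  also have "F b - F 0 = fact j / (2 * a^(j+1)) * (1 - poisson_cdf j (a*b^2))"
    using assms by (simp add: F_def field_simps)
  finally show ?thesis .
qed

lemma integral_gauss_odd_moment_le:
  fixes a b :: real
  assumes "a > 0" "b \<ge> 0"
  shows "integral {0..b} (\<lambda>t. t^(2*j+1) * exp (-a*t^2)) \<le> fact j / (2 * a^(j+1))"
proof -
  have "0 \<le> poisson_cdf j (a*b^2)"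
    using assms by (intro poisson_cdf_nonneg) auto
  then have "fact j / (2 * a^(j+1)) * (1 - poisson_cdf j (a*b^2)) \<le> fact j / (2 * a^(j+1)) * 1"
    using assms by (intro mult_left_mono) auto
  then show ?thesis
    using integral_unique[OF has_integral_gauss_odd_moment[OF assms]] by simp
qed

section \<open>Power series at the peak\<close>

lemma eval_fps_remainder_bound:
  fixes F :: "complex fps"
  assumes "ereal r < fps_conv_radius F"
  obtains C where
    "\<And>z. norm z \<le> r \<Longrightarrow> norm (eval_fps F z - (\<Sum>i<D. fps_nth F i * z^i)) \<le> C * norm z ^ D"
proof -
  define G where "G = fps_shift D F"
  have in_disc: "norm z < fps_conv_radius F" if "norm z \<le> r" for z :: complex
    using that assms by (auto intro: le_less_trans[of _ "ereal r"])
  have "continuous_on (cball 0 r) (eval_fps G)"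
    using in_disc by (intro continuous_on_subset[OF continuous_on_eval_fps]) (auto simp: G_def)
  then have "bounded (eval_fps G ` cball 0 r)"
    by (intro compact_imp_bounded compact_continuous_image) auto
  then obtain C where "\<forall>z\<in>cball 0 r. norm (eval_fps G z) \<le> C"
    unfolding bounded_iff by blast
  then have C: "\<And>z. norm z \<le> r \<Longrightarrow> norm (eval_fps G z) \<le> C"
    by simp
  have remainder: "eval_fps F z - (\<Sum>i<D. fps_nth F i * z^i) = eval_fps G z * z^D"
    if "norm z \<le> r" for z
  proof -
    have "(\<lambda>i. fps_nth F (i + D) * z^(i + D)) sums (eval_fps F z - (\<Sum>i<D. fps_nth F i * z^i))"
      using sums_split_initial_segment[OF sums_eval_fps[OF in_disc[OF that]]] by simp
    moreover have "(\<lambda>i. fps_nth F (i + D) * z^(i + D)) sums (eval_fps G z * z^D)"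
      using sums_mult2[OF sums_eval_fps[of z G]] in_disc[OF that]
      by (simp add: G_def power_add mult.assoc)
    ultimately show ?thesis by (rule sums_unique2)
  qed
  show thesis
    by (rule that[of C]) (simp add: remainder norm_mult norm_power C mult_right_mono)
qed

definition log_remainder :: "real \<Rightarrow> real" where
  "log_remainder u = ln (1 + u) - u + u^2 / 2"

lemma log_remainder_fps_sums:
  fixes z :: complex
  assumes "norm z < 1"
  shows "(\<lambda>i. fps_nth log_remainder_fps i * z^i) sums (Ln (1 + z) - z + z^2/2)"
proof -
  define L where "L i = - ((- z) ^ i) / of_nat i" for i
  have "L sums Ln (1 + z)"
    unfolding L_def by (rule Ln_series'[OF assms])
  then have "(\<lambda>i. L i - (if i = 1 then L i else 0) - (if i = 2 then L i else 0)) sums (Ln (1 + z) - L 1 - L 2)"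
    by (intro sums_diff sums_single)
  moreover have "L i - (if i = 1 then L i else 0) - (if i = 2 then L i else 0) =
      fps_nth log_remainder_fps i * z^i" for i
  proof -
    consider "i = 0" | "i = 1" | "i = 2" | "i \<ge> 3" by linarith
    then show ?thesis
    proof cases
      case 4
      then show ?thesis by (simp add: L_def log_remainder_fps_def power_minus[of z])
    qed (simp_all add: L_def log_remainder_fps_def)
  qed
  ultimately show ?thesis
    by (simp add: L_def algebra_simps)
qed

lemma log_remainder_has_fps_expansion:
  "(\<lambda>z. Ln (1 + z) - z + z^2/2) has_fps_expansion log_remainder_fps"
proof (rule has_fps_expansionI)
  have "eventually (\<lambda>z::complex. z \<in> ball 0 1) (nhds 0)"
    by (intro eventually_nhds_in_open) auto
  then show "eventually (\<lambda>z. (\<lambda>i. fps_nth log_remainder_fps i * z^i) sums (Ln (1 + z) - z + z^2/2)) (nhds 0)"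
    by (rule eventually_mono) (auto intro: log_remainder_fps_sums)
qed

lemma fps_expansions_near_0:
  fixes v :: complex
  obtains d where "0 < d" and "\<And>z. norm z < d \<Longrightarrow>
      norm z < fps_conv_radius log_remainder_fps \<and> norm z < fps_conv_radius (fps_binomial v) \<and>
      eval_fps log_remainder_fps z = Ln (1 + z) - z + z^2/2 \<and> eval_fps (fps_binomial v) z = (1 + z) powr v"
proof -
  have in_eball: "eventually (\<lambda>z. z \<in> eball 0 (fps_conv_radius F)) (nhds 0)"
    if "f has_fps_expansion F" for F :: "complex fps" and f
    using that by (intro eventually_nhds_in_open) (auto simp: has_fps_expansion_def zero_ereal_def)
  have "eventually (\<lambda>z. norm z < fps_conv_radius log_remainder_fps \<and> norm z < fps_conv_radius (fps_binomial v) \<and>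
      eval_fps log_remainder_fps z = Ln (1 + z) - z + z^2/2 \<and> eval_fps (fps_binomial v) z = (1 + z) powr v) (nhds 0)"
    using in_eball[OF log_remainder_has_fps_expansion] in_eball[OF has_fps_expansion_binomial_complex[of v]]
      log_remainder_has_fps_expansion[unfolded has_fps_expansion_def, THEN conjunct2]
      has_fps_expansion_binomial_complex[of v, unfolded has_fps_expansion_def, THEN conjunct2]
    by eventually_elim auto
  then show thesis
    using that unfolding eventually_nhds_metric by (auto simp: dist_norm)
qed

lemma fps_conv_radius_peak_fps:
  "min (fps_conv_radius log_remainder_fps) (fps_conv_radius (fps_binomial v)) \<le> fps_conv_radius (peak_fps v k)"
proof -
  have "min (fps_conv_radius log_remainder_fps) (fps_conv_radius (fps_binomial v)) \<le>
      min (fps_conv_radius (log_remainder_fps ^ k)) (fps_conv_radius (fps_binomial v))"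
    using fps_conv_radius_power[of log_remainder_fps k] by (auto simp: min_def)
  also have "\<dots> \<le> fps_conv_radius (peak_fps v k)"
    unfolding peak_fps_def by (rule fps_conv_radius_mult)
  finally show ?thesis .
qed

lemma eval_peak_fps:
  assumes "norm z < fps_conv_radius log_remainder_fps" "norm z < fps_conv_radius (fps_binomial v)"
  shows "eval_fps (peak_fps v k) z = eval_fps log_remainder_fps z ^ k * eval_fps (fps_binomial v) z"
proof -
  have "norm z < fps_conv_radius (log_remainder_fps ^ k)"
    using assms fps_conv_radius_power[of log_remainder_fps k] by (auto intro: less_le_trans)
  then show ?thesis
    using assms by (simp add: peak_fps_def eval_fps_mult eval_fps_power)
qed

lemma peak_fps_real_disc:
  fixes v :: complex
  obtains r where "0 < r" "r < 1"
    and "ereal r < fps_conv_radius log_remainder_fps" "ereal r < fps_conv_radius (fps_binomial v)"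
    and "\<And>k. ereal r < fps_conv_radius (peak_fps v k)"
    and "\<And>u. \<bar>u\<bar> \<le> r \<Longrightarrow> eval_fps log_remainder_fps (of_real u) = of_real (log_remainder u)"
    and "\<And>u. \<bar>u\<bar> \<le> r \<Longrightarrow> eval_fps (fps_binomial v) (of_real u) = (1 + of_real u) powr v"
    and "\<And>k u. \<bar>u\<bar> \<le> r \<Longrightarrow>
           eval_fps (peak_fps v k) (of_real u) = of_real (log_remainder u) ^ k * (1 + of_real u) powr v"
proof -
  obtain d where "0 < d" and near_0: "\<And>z. norm z < d \<Longrightarrow>
      norm z < fps_conv_radius log_remainder_fps \<and> norm z < fps_conv_radius (fps_binomial v) \<and>
      eval_fps log_remainder_fps z = Ln (1 + z) - z + z^2/2 \<and> eval_fps (fps_binomial v) z = (1 + z) powr v"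
    using fps_expansions_near_0[of v] by blast
  define r where "r = min (d/2) (1/2)"
  have r: "0 < r" "r < 1" "r < d"
    using \<open>0 < d\<close> by (auto simp: r_def)
  have rad: "ereal r < fps_conv_radius log_remainder_fps" "ereal r < fps_conv_radius (fps_binomial v)"
    using near_0[of "of_real r"] r by auto
  have eval_log: "eval_fps log_remainder_fps (of_real u) = of_real (log_remainder u)"
    and eval_binomial: "eval_fps (fps_binomial v) (of_real u) = (1 + of_real u) powr v"
    if "\<bar>u\<bar> \<le> r" for u
  proof -
    have u: "norm (complex_of_real u) < d" "1 + u > 0"
      using that r by auto
    then have "Ln (1 + complex_of_real u) = of_real (ln (1 + u))"
      using Ln_of_real[of "1 + u"] by simp
    with near_0[OF u(1)] show "eval_fps log_remainder_fps (of_real u) = of_real (log_remainder u)"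
      by (simp add: log_remainder_def)
    show "eval_fps (fps_binomial v) (of_real u) = (1 + of_real u) powr v"
      using near_0[OF u(1)] by simp
  qed
  show thesis
  proof (rule that[OF r(1,2) rad])
    show "ereal r < fps_conv_radius (peak_fps v k)" for k
      using rad fps_conv_radius_peak_fps[of v k] by (metis less_le_trans min_less_iff_conj)
    show "eval_fps (peak_fps v k) (of_real u) = of_real (log_remainder u) ^ k * (1 + of_real u) powr v"
      if "\<bar>u\<bar> \<le> r" for k u
      using that near_0[of "of_real u"] r by (simp add: eval_peak_fps eval_log eval_binomial)
  qed (use eval_log eval_binomial in auto)
qed

definition peak_poly :: "nat \<Rightarrow> complex \<Rightarrow> nat \<Rightarrow> real \<Rightarrow> complex" where
  "peak_poly K v k u = (\<Sum>i<3*K. fps_nth (peak_fps v k) i * of_real u ^ i)"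

lemma peak_fps_local_bounds:
  fixes v :: complex
  obtains r Cq CB Cf where "0 < r" "r < 1"
    and "\<And>u. \<bar>u\<bar> \<le> r \<Longrightarrow> \<bar>log_remainder u\<bar> \<le> Cq * \<bar>u\<bar>^3"
    and "\<And>u. \<bar>u\<bar> \<le> r \<Longrightarrow> norm ((1 + of_real u) powr v) \<le> CB"
    and "\<And>k u. \<bar>u\<bar> \<le> r \<Longrightarrow>
           norm (of_real (log_remainder u) ^ k * (1 + of_real u) powr v - peak_poly K v k u)
             \<le> Cf k * \<bar>u\<bar>^(3*K)"
proof -
  obtain r where r: "0 < r" "r < 1"
    and rad: "ereal r < fps_conv_radius log_remainder_fps" "ereal r < fps_conv_radius (fps_binomial v)"
    and rad_peak: "\<And>k. ereal r < fps_conv_radius (peak_fps v k)"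
    and eval_log: "\<And>u. \<bar>u\<bar> \<le> r \<Longrightarrow> eval_fps log_remainder_fps (of_real u) = of_real (log_remainder u)"
    and eval_binomial: "\<And>u. \<bar>u\<bar> \<le> r \<Longrightarrow> eval_fps (fps_binomial v) (of_real u) = (1 + of_real u) powr v"
    and eval_peak: "\<And>k u. \<bar>u\<bar> \<le> r \<Longrightarrow>
           eval_fps (peak_fps v k) (of_real u) = of_real (log_remainder u) ^ k * (1 + of_real u) powr v"
    using peak_fps_real_disc[of v] by blast
  obtain Cq where Cq: "\<And>z. norm z \<le> r \<Longrightarrow>
      norm (eval_fps log_remainder_fps z - (\<Sum>i<3. fps_nth log_remainder_fps i * z^i)) \<le> Cq * norm z ^ 3"
    using eval_fps_remainder_bound[OF rad(1), where D = 3] by blast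
  obtain CB where CB: "\<And>z. norm z \<le> r \<Longrightarrow>
      norm (eval_fps (fps_binomial v) z - (\<Sum>i<0. fps_nth (fps_binomial v) i * z^i)) \<le> CB * norm z ^ 0"
    using eval_fps_remainder_bound[OF rad(2), where D = 0] by blast
  have "\<exists>C. \<forall>z. norm z \<le> r \<longrightarrow>
      norm (eval_fps (peak_fps v k) z - (\<Sum>i<3*K. fps_nth (peak_fps v k) i * z^i)) \<le> C * norm z ^ (3*K)" for k
    by (rule eval_fps_remainder_bound[OF rad_peak, where D = "3*K"]) blast
  then obtain Cf where Cf: "\<And>k z. norm z \<le> r \<Longrightarrow>
      norm (eval_fps (peak_fps v k) z - (\<Sum>i<3*K. fps_nth (peak_fps v k) i * z^i)) \<le> Cf k * norm z ^ (3*K)"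
    by metis
  have cubic: "(\<Sum>i<3. fps_nth log_remainder_fps i * z^i) = 0" for z
    by (simp add: log_remainder_fps_def numeral_3_eq_3)
  show thesis
  proof (rule that[of r Cq CB Cf])
    fix u assume u: "\<bar>u\<bar> \<le> r"
    show "\<bar>log_remainder u\<bar> \<le> Cq * \<bar>u\<bar>^3"
      using Cq[of "of_real u"] u eval_log[OF u] cubic by simp
    show "norm ((1 + of_real u) powr v) \<le> CB"
      using CB[of "of_real u"] u eval_binomial[OF u] by simp
  next
    fix k u assume u: "\<bar>u\<bar> \<le> r"
    show "norm (of_real (log_remainder u) ^ k * (1 + of_real u) powr v - peak_poly K v k u)
            \<le> Cf k * \<bar>u\<bar>^(3*K)"
      using Cf[of "of_real u" k] u eval_peak[OF u] by (simp add: peak_poly_def)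
  qed (use r in auto)
qed

section \<open>Approximation of the integrand near the peak\<close>

definition peak_integrand :: "real \<Rightarrow> complex \<Rightarrow> real \<Rightarrow> complex" where
  "peak_integrand n v u = of_real (exp (- n * u)) * exp ((of_real n + v) * of_real (ln (1 + u)))"

(* peak_integrand n v u = exp (-n u^2 / 2) exp (n q) (1 + u)^v with q = log_remainder u; the approximation
   truncates exp (n q) after K terms and each q^k (1 + u)^v after degree 3K. *)
definition peak_approx :: "nat \<Rightarrow> real \<Rightarrow> complex \<Rightarrow> real \<Rightarrow> complex" where
  "peak_approx K n v u =
     of_real (exp (- n * u^2 / 2)) * (\<Sum>k<K. of_real (n^k / fact k) * peak_poly K v k u)"

lemma peak_integrand_minus_approx:
  fixes v :: complex
  assumes "1 + u > 0"
  defines "q \<equiv> log_remainder u" and "B \<equiv> (1 + of_real u) powr v"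
  shows "peak_integrand n v u - peak_approx K n v u =
           of_real (exp (- n * u^2 / 2)) *
             (of_real (exp (n * q) - (\<Sum>k<K. (n * q)^k / fact k)) * B +
              (\<Sum>k<K. of_real (n^k / fact k) * (of_real q ^ k * B - peak_poly K v k u)))"
proof -
  have "1 + complex_of_real u \<noteq> 0"
    using assms(1) by (metis of_real_1 of_real_add of_real_eq_0_iff less_irrefl)
  moreover have "Ln (1 + complex_of_real u) = of_real (ln (1 + u))"
    using Ln_of_real[OF assms(1)] by simp
  ultimately have "B = exp (v * of_real (ln (1 + u)))"
    by (simp add: B_def powr_def)
  then have "peak_integrand n v u = of_real (exp (- n * u^2 / 2) * exp (n * q)) * B"
    by (simp add: peak_integrand_def q_def log_remainder_def algebra_simps
        flip: exp_add exp_of_real)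
  moreover have "(\<Sum>k<K. of_real (n^k / fact k) * (of_real q ^ k * B)) =
      of_real (\<Sum>k<K. (n * q)^k / fact k) * (B :: complex)"
    by (simp add: sum_distrib_left sum_divide_distrib power_mult_distrib algebra_simps)
  ultimately show ?thesis
    by (simp add: peak_approx_def algebra_simps sum_subtractf sum_distrib_left)
qed

lemma exp_taylor_remainder_bound:
  fixes x :: real
  shows "\<bar>exp x - (\<Sum>m<K. x^m / fact m)\<bar> \<le> exp \<bar>x\<bar> * \<bar>x\<bar>^K"
proof -
  obtain t where t: "\<bar>t\<bar> \<le> \<bar>x\<bar>" "exp x = (\<Sum>m<K. x^m / fact m) + exp t / fact K * x^K"
    using Maclaurin_exp_le by blast
  have "\<bar>exp t / fact K * x^K\<bar> = exp t * \<bar>x\<bar>^K / fact K"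
    by (simp add: abs_mult power_abs)
  also have "\<dots> \<le> exp t * \<bar>x\<bar>^K / 1"
    by (intro divide_left_mono) (auto simp: fact_ge_1)
  also have "\<dots> = exp t * \<bar>x\<bar>^K"
    by simp
  also have "\<dots> \<le> exp \<bar>x\<bar> * \<bar>x\<bar>^K"
    using t(1) by (intro mult_right_mono) auto
  finally show ?thesis using t(2) by simp
qed

(* The hypothesis c |u| <= 1/4 makes |n q| <= n u^2 / 4, which the Gaussian factor exp (-n u^2 / 2)
   of the integrand absorbs. *)
lemma exp_taylor_remainder_cubic:
  fixes n q u c :: real
  assumes "n \<ge> 0" "0 \<le> c" "\<bar>q\<bar> \<le> c * \<bar>u\<bar>^3" "c * \<bar>u\<bar> \<le> 1/4"
  shows "\<bar>exp (n * q) - (\<Sum>k<K. (n * q)^k / fact k)\<bar> \<le> exp (n * u^2 / 4) * (n * (c * \<bar>u\<bar>^3))^K"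
proof -
  have cubic: "\<bar>n * q\<bar> \<le> n * (c * \<bar>u\<bar>^3)"
    using assms by (simp add: abs_mult mult_left_mono)
  have "c * \<bar>u\<bar>^3 = (c * \<bar>u\<bar>) * u^2"
    by (simp add: power3_eq_cube power2_eq_square)
  also have "\<dots> \<le> 1/4 * u^2"
    using assms by (intro mult_right_mono) auto
  finally have "n * (c * \<bar>u\<bar>^3) \<le> n * (u^2 / 4)"
    using assms by (intro mult_left_mono) auto
  with cubic have "\<bar>n * q\<bar> \<le> n * u^2 / 4"
    by simp
  with cubic show ?thesis
    by (intro order_trans[OF exp_taylor_remainder_bound] mult_mono power_mono) auto
qed

lemma norm_sum_taylor_coeffs_le:
  fixes e :: "nat \<Rightarrow> 'a::real_normed_algebra_1"
  assumes "n \<ge> 1"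
  shows "norm (\<Sum>k<K. of_real (n^k / fact k) * e k) \<le> n^K * (\<Sum>k<K. norm (e k))"
proof -
  have "norm (of_real (n^k / fact k) * e k) \<le> n^K * norm (e k)" if "k < K" for k
  proof -
    have "n^k / fact k \<le> n^K"
      using assms that
      by (intro order_trans[OF _ power_increasing[of k K n]]) (auto simp: divide_le_eq fact_ge_1 mult_le_cancel_left1)
    moreover have "norm (of_real (n^k / fact k) * e k) \<le> n^k / fact k * norm (e k)"
      using assms by (simp add: norm_mult_ineq[THEN order_trans])
    ultimately show ?thesis
      by (meson mult_right_mono norm_ge_zero order_trans)
  qed
  then show ?thesis
    by (auto simp: sum_distrib_left intro!: order_trans[OF norm_sum] sum_mono)
qed

lemma peak_approx_error_pointwise:
  fixes v :: complex
  assumes "n \<ge> 1" "1 + u > 0" "0 \<le> c" "\<bar>log_remainder u\<bar> \<le> c * \<bar>u\<bar>^3" "c * \<bar>u\<bar> \<le> 1/4"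
    and "norm ((1 + of_real u) powr v) \<le> CB"
    and "\<And>k. norm (of_real (log_remainder u) ^ k * (1 + of_real u) powr v - peak_poly K v k u)
               \<le> Cf k * \<bar>u\<bar>^(3*K)"
  shows "norm (peak_integrand n v u - peak_approx K n v u)
           \<le> (\<bar>CB\<bar> * c^K + (\<Sum>k<K. \<bar>Cf k\<bar>)) * n^K * \<bar>u\<bar>^(3*K) * exp (- n * u^2 / 4)"
proof -
  define q where "q = log_remainder u"
  define B where "B = (1 + complex_of_real u) powr v"
  define T where "T = exp (n * q) - (\<Sum>k<K. (n * q)^k / fact k)"
  define S where "S = (\<Sum>k<K. of_real (n^k / fact k) * (of_real q ^ k * B - peak_poly K v k u))"
  define SCf where "SCf = (\<Sum>k<K. \<bar>Cf k\<bar>)"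
  have T: "\<bar>T\<bar> \<le> exp (n * u^2 / 4) * (n * (c * \<bar>u\<bar>^3))^K"
    unfolding T_def q_def using assms by (intro exp_taylor_remainder_cubic) auto
  have "norm S \<le> n^K * (\<Sum>k<K. \<bar>Cf k\<bar> * \<bar>u\<bar>^(3*K))"
    unfolding S_def using assms(1)
  proof (rule order_trans[OF norm_sum_taylor_coeffs_le mult_left_mono[OF sum_mono]])
    show "norm (of_real q ^ k * B - peak_poly K v k u) \<le> \<bar>Cf k\<bar> * \<bar>u\<bar>^(3*K)" for k
      using assms(7)[of k] by (auto simp: q_def B_def intro: order_trans[OF _ mult_right_mono])
  qed (use assms in auto)
  then have S: "norm S \<le> n^K * SCf * \<bar>u\<bar>^(3*K)"
    by (simp add: SCf_def sum_distrib_right mult.assoc)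
  have "norm (peak_integrand n v u - peak_approx K n v u) = exp (- n * u^2 / 2) * norm (of_real T * B + S)"
    using assms(2) by (simp add: peak_integrand_minus_approx q_def B_def T_def S_def norm_mult)
  also have "\<dots> \<le> exp (- n * u^2 / 2) * (\<bar>T\<bar> * \<bar>CB\<bar> + n^K * SCf * \<bar>u\<bar>^(3*K))"
  proof (intro mult_left_mono)
    have "norm (of_real T * B) \<le> \<bar>T\<bar> * \<bar>CB\<bar>"
      using assms(6) by (auto simp: norm_mult B_def intro!: mult_left_mono)
    then show "norm (of_real T * B + S) \<le> \<bar>T\<bar> * \<bar>CB\<bar> + n^K * SCf * \<bar>u\<bar>^(3*K)"
      using S norm_triangle_ineq[of "of_real T * B" S] by linarith
  qed simp
  also have "\<dots> = (exp (- n * u^2 / 2) * \<bar>T\<bar>) * \<bar>CB\<bar> + exp (- n * u^2 / 2) * (n^K * SCf * \<bar>u\<bar>^(3*K))"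
    by (simp add: algebra_simps)
  also have "\<dots> \<le> (exp (- n * u^2 / 4) * (n * (c * \<bar>u\<bar>^3))^K) * \<bar>CB\<bar> +
      exp (- n * u^2 / 4) * (n^K * SCf * \<bar>u\<bar>^(3*K))"
  proof (intro add_mono mult_right_mono)
    have "exp (- n * u^2 / 2) * \<bar>T\<bar> \<le> exp (- n * u^2 / 2) * (exp (n * u^2 / 4) * (n * (c * \<bar>u\<bar>^3))^K)"
      using T by (intro mult_left_mono) auto
    also have "\<dots> = exp (- n * u^2 / 4) * (n * (c * \<bar>u\<bar>^3))^K"
      by (simp add: mult.assoc [symmetric] flip: exp_add)
    finally show "exp (- n * u^2 / 2) * \<bar>T\<bar> \<le> exp (- n * u^2 / 4) * (n * (c * \<bar>u\<bar>^3))^K" .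
    show "exp (- n * u^2 / 2) \<le> exp (- n * u^2 / 4)" "0 \<le> n^K * SCf * \<bar>u\<bar>^(3*K)"
      using assms(1) by (simp_all add: SCf_def sum_nonneg)
  qed simp
  also have "\<dots> = (\<bar>CB\<bar> * c^K + SCf) * n^K * \<bar>u\<bar>^(3*K) * exp (- n * u^2 / 4)"
    unfolding power_mult_distrib power_mult by (simp add: algebra_simps)
  finally show ?thesis
    by (simp add: SCf_def)
qed

lemma peak_approx_error:
  fixes v :: complex
  obtains \<delta> C where "0 < \<delta>" "\<delta> < 1"
    and "\<And>n u. n \<ge> 1 \<Longrightarrow> \<bar>u\<bar> \<le> \<delta> \<Longrightarrow>
           norm (peak_integrand n v u - peak_approx K n v u) \<le> C * n^K * \<bar>u\<bar>^(3*K) * exp (- n * u^2 / 4)"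
proof -
  obtain r Cq CB Cf where r: "0 < r" "r < 1"
    and Cq: "\<And>u. \<bar>u\<bar> \<le> r \<Longrightarrow> \<bar>log_remainder u\<bar> \<le> Cq * \<bar>u\<bar>^3"
    and CB: "\<And>u. \<bar>u\<bar> \<le> r \<Longrightarrow> norm ((1 + of_real u) powr v) \<le> CB"
    and Cf: "\<And>k u. \<bar>u\<bar> \<le> r \<Longrightarrow>
           norm (of_real (log_remainder u) ^ k * (1 + of_real u) powr v - peak_poly K v k u)
             \<le> Cf k * \<bar>u\<bar>^(3*K)"
    using peak_fps_local_bounds[of v K] by blast
  define \<delta> where "\<delta> = min r (1 / (4 * (\<bar>Cq\<bar> + 1)))"
  have \<delta>: "0 < \<delta>" "\<delta> \<le> r" "\<bar>Cq\<bar> * \<delta> \<le> 1/4"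
  proof -
    show "0 < \<delta>" "\<delta> \<le> r" using r by (auto simp: \<delta>_def)
    have "\<bar>Cq\<bar> * \<delta> \<le> \<bar>Cq\<bar> * (1 / (4 * (\<bar>Cq\<bar> + 1)))"
      by (intro mult_left_mono) (auto simp: \<delta>_def)
    also have "\<dots> \<le> 1/4" by (simp add: field_simps)
    finally show "\<bar>Cq\<bar> * \<delta> \<le> 1/4" .
  qed
  have "norm (peak_integrand n v u - peak_approx K n v u)
          \<le> (\<bar>CB\<bar> * \<bar>Cq\<bar>^K + (\<Sum>k<K. \<bar>Cf k\<bar>)) * n^K * \<bar>u\<bar>^(3*K) * exp (- n * u^2 / 4)"
    if n: "n \<ge> 1" and u: "\<bar>u\<bar> \<le> \<delta>" for n u :: real
  proof (rule peak_approx_error_pointwise[OF n])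
    have ur: "\<bar>u\<bar> \<le> r" using u \<delta> by linarith
    show "1 + u > 0" using ur r by linarith
    have "Cq * \<bar>u\<bar>^3 \<le> \<bar>Cq\<bar> * \<bar>u\<bar>^3"
      by (intro mult_right_mono) auto
    with Cq[OF ur] show "\<bar>log_remainder u\<bar> \<le> \<bar>Cq\<bar> * \<bar>u\<bar>^3"
      by linarith
    show "\<bar>Cq\<bar> * \<bar>u\<bar> \<le> 1/4"
      using mult_left_mono[OF u, of "\<bar>Cq\<bar>"] \<delta>(3) by simp
  qed (use CB Cf u \<delta> in auto)
  then show thesis
    using \<delta> r by (intro that[of \<delta> "\<bar>CB\<bar> * \<bar>Cq\<bar>^K + (\<Sum>k<K. \<bar>Cf k\<bar>)"]) auto
qed

section \<open>Decomposition of \<open>\<theta>\<close>\<close>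

definition theta_integrand :: "real \<Rightarrow> complex \<Rightarrow> real \<Rightarrow> complex" where
  "theta_integrand n v s = of_real (exp (n * (1 - s))) * of_real s powr (of_real n + v)"

definition gamma_integrand :: "real \<Rightarrow> complex \<Rightarrow> real \<Rightarrow> complex" where
  "gamma_integrand n v t = of_real t powr (of_real n + v) / of_real (exp t)"

lemma continuous_on_theta_integrand:
  "n + Re v > 0 \<Longrightarrow> continuous_on {0..b} (theta_integrand n v)"
  unfolding theta_integrand_def by (intro continuous_intros) auto

lemma continuous_on_gamma_integrand:
  "n + Re v > 0 \<Longrightarrow> continuous_on {0..b} (gamma_integrand n v)"
  unfolding gamma_integrand_def by (intro continuous_intros) auto

lemma theta_integrand_shift:
  assumes "1 + u > 0"
  shows "theta_integrand n v (1 + u) = peak_integrand n v u"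
proof -
  have "1 + complex_of_real u \<noteq> 0"
    using assms by (metis of_real_1 of_real_add of_real_eq_0_iff less_irrefl)
  moreover have "Ln (1 + complex_of_real u) = of_real (ln (1 + u))"
    using Ln_of_real[OF assms] by simp
  ultimately show ?thesis
    by (simp add: theta_integrand_def peak_integrand_def powr_def)
qed

lemma gamma_integrand_integrable_on_tail:
  assumes "n + Re v > 0" "T > 0"
  shows "gamma_integrand n v integrable_on {T..}"
proof -
  have "gamma_integrand n v absolutely_integrable_on {0<..}"
    unfolding gamma_integrand_def
    using absolutely_integrable_Gamma_integral'[of "of_real n + v + 1"] assms by simp
  then have "gamma_integrand n v absolutely_integrable_on {T..}"
    by (rule set_integrable_subset) (use assms in auto)
  then show ?thesis
    by (rule set_lebesgue_integral_eq_integral)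
qed

lemma Gamma_eq_integral_split:
  assumes "n + Re v > 0" "T > 0"
  shows "Gamma (of_real n + v + 1) = integral {0..T} (gamma_integrand n v) + integral {T..} (gamma_integrand n v)"
proof -
  have "(gamma_integrand n v has_integral Gamma (of_real n + v + 1)) {0..}"
    unfolding gamma_integrand_def using Gamma_integral_complex[of "of_real n + v + 1"] assms by simp
  moreover have "(gamma_integrand n v has_integral
      integral {0..T} (gamma_integrand n v) + integral {T..} (gamma_integrand n v)) ({0..T} \<union> {T..})"
    using integrable_continuous_interval[OF continuous_on_gamma_integrand[OF assms(1)]]
      gamma_integrand_integrable_on_tail[OF assms]
    by (intro has_integral_Un) (auto intro: negligible_subset[of "{T}"])
  moreover have "{0..T} \<union> {T..} = {0::real..}"
    using assms by auto
  ultimately show ?thesis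
    using has_integral_unique by metis
qed

lemma integral_gamma_integrand_rescale:
  assumes "n + Re v > 0" "n > 0" "b \<ge> 0"
  shows "integral {0..n*b} (gamma_integrand n v) =
           of_real n * of_real n powr (of_real n + v) * of_real (exp (-n)) * integral {0..b} (theta_integrand n v)"
proof -
  define c where "c = of_real n powr (of_real n + v) * of_real (exp (-n))"
  have "((\<lambda>s. gamma_integrand n v (n * s)) has_integral (1/n) *\<^sub>R integral {0..n*b} (gamma_integrand n v)) {0..b}"
    using has_integral_stretch_real[of "gamma_integrand n v" _ 0 "n*b" n]
      integrable_continuous_interval[OF continuous_on_gamma_integrand[OF assms(1)]] assms(2)
    by (simp add: has_integral_integral)
  moreover have "gamma_integrand n v (n * s) = c * theta_integrand n v s" if "s \<in> {0..b}" for s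
  proof -
    have "of_real (n * s) powr (of_real n + v) = of_real n powr (of_real n + v) * of_real s powr (of_real n + v)"
      using powr_times_real[of "of_real n" "of_real s"] assms that by simp
    moreover have "complex_of_real (exp (n * (1 - s))) = of_real (exp n) * of_real (exp (- (n * s)))"
      by (simp add: algebra_simps flip: exp_add of_real_mult)
    ultimately show ?thesis
      by (simp add: gamma_integrand_def theta_integrand_def c_def exp_minus field_simps)
  qed
  ultimately have "((\<lambda>s. c * theta_integrand n v s) has_integral (1/n) *\<^sub>R integral {0..n*b} (gamma_integrand n v)) {0..b}"
    by (rule has_integral_eq[rotated]) auto
  then have "c * integral {0..b} (theta_integrand n v) = (1/n) *\<^sub>R integral {0..n*b} (gamma_integrand n v)"
    by (metis integral_mult_right integral_unique)
  then show ?thesis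
    using assms(2) by (simp add: c_def field_simps scaleR_conv_of_real)
qed

definition odd_part_integral :: "real \<Rightarrow> (real \<Rightarrow> complex) \<Rightarrow> complex" where
  "odd_part_integral \<delta> f = integral {0..\<delta>} (\<lambda>t. f (-t) - f t)"

lemma has_integral_peak_integrand:
  assumes "n + Re v > 0" "0 \<le> \<delta>" "\<delta> < 1"
  shows "(peak_integrand n v has_integral integral {1..1+\<delta>} (theta_integrand n v)) {0..\<delta>}"
    and "((\<lambda>t. peak_integrand n v (-t)) has_integral integral {1-\<delta>..1} (theta_integrand n v)) {0..\<delta>}"
proof -
  have integrable: "theta_integrand n v integrable_on {a..b}" if "0 \<le> a" for a b
    using integrable_on_subinterval[OF integrable_continuous_interval[OF continuous_on_theta_integrand[OF assms(1)]],
        of a b "max b 0"] that by auto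
  have shift: "theta_integrand n v (1 + t) = peak_integrand n v t"
    and shift': "theta_integrand n v (1 - t) = peak_integrand n v (-t)" if "t \<in> {0..\<delta>}" for t
    using that assms theta_integrand_shift[of t] theta_integrand_shift[of "-t"] by auto
  have "((theta_integrand n v \<circ> (+) 1) has_integral integral {1..1+\<delta>} (theta_integrand n v)) {0..\<delta>}"
    using integrable[of 1 "1+\<delta>"] by (simp add: has_integral_shift_Icc_real has_integral_integral add.commute)
  then show "(peak_integrand n v has_integral integral {1..1+\<delta>} (theta_integrand n v)) {0..\<delta>}"
    by (rule has_integral_eq[rotated]) (use shift in simp)
  have "((theta_integrand n v \<circ> (+) 1) has_integral integral {1-\<delta>..1} (theta_integrand n v)) {-\<delta>..0}"
    using integrable[of "1-\<delta>" 1] assms by (simp add: has_integral_shift_Icc_real has_integral_integral add.commute)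
  then have "((\<lambda>t. (theta_integrand n v \<circ> (+) 1) (-t)) has_integral integral {1-\<delta>..1} (theta_integrand n v)) {0..\<delta>}"
    using has_integral_reflect_real[where f = "theta_integrand n v \<circ> (+) 1" and a = "-\<delta>" and b = 0] by simp
  then show "((\<lambda>t. peak_integrand n v (-t)) has_integral integral {1-\<delta>..1} (theta_integrand n v)) {0..\<delta>}"
    by (rule has_integral_eq[rotated]) (use shift' in simp)
qed

definition lower_tail :: "real \<Rightarrow> complex \<Rightarrow> real \<Rightarrow> complex" where
  "lower_tail n v \<delta> = of_real n / 2 * integral {0..1 - \<delta>} (theta_integrand n v)"

definition upper_tail :: "real \<Rightarrow> complex \<Rightarrow> real \<Rightarrow> complex" where
  "upper_tail n v \<delta> = of_real (exp n) / (2 * exp ((of_real n + v) * of_real (ln n))) *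
     integral {n * (1 + \<delta>)..} (gamma_integrand n v)"

lemma theta_decomposition:
  assumes "0 < \<delta>" "\<delta> < 1" "norm v < n"
  shows "theta n v =
           1 + lower_tail n v \<delta> + of_real n / 2 * odd_part_integral \<delta> (peak_integrand n v) - upper_tail n v \<delta>"
proof -
  have n: "n > 0" "n + Re v > 0"
    using assms(3) abs_Re_le_cmod[of v] norm_ge_zero[of v] by linarith+
  define X where "X = exp ((of_real n + v) * of_real (ln n))"
  define G0 where "G0 = integral {0..1-\<delta>} (theta_integrand n v)"
  define G1 where "G1 = integral {1-\<delta>..1} (theta_integrand n v)"
  define G2 where "G2 = integral {1..1+\<delta>} (theta_integrand n v)"
  have X_powr: "X = of_real n powr (of_real n + v)"
    using n(1) by (simp add: X_def powr_def Ln_of_real)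
  have integrable: "theta_integrand n v integrable_on {0..b}" for b
    by (rule integrable_continuous_interval[OF continuous_on_theta_integrand[OF n(2)]])
  have "integral {0..1} (theta_integrand n v) = G0 + G1"
    unfolding G0_def G1_def using assms(1,2)
    by (intro Henstock_Kurzweil_Integration.integral_combine[symmetric] integrable) auto
  moreover have "integral {0..1+\<delta>} (theta_integrand n v) = integral {0..1} (theta_integrand n v) + G2"
    unfolding G2_def using assms(1)
    by (intro Henstock_Kurzweil_Integration.integral_combine[symmetric] integrable) auto
  ultimately have whole: "integral {0..1+\<delta>} (theta_integrand n v) = G0 + G1 + G2"
    by simp
  have "Gamma (of_real n + v + 1) = of_real n * X * of_real (exp (-n)) * (G0 + G1 + G2) +
      integral {n * (1 + \<delta>)..} (gamma_integrand n v)"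
    using Gamma_eq_integral_split[OF n(2), of "n * (1 + \<delta>)"] assms n
      integral_gamma_integrand_rescale[OF n(2,1), of "1 + \<delta>"] whole X_powr
    by simp
  then have Gamma: "of_real (exp n) / (2 * X) * Gamma (of_real n + v + 1) =
      of_real n / 2 * (G0 + G1 + G2) + upper_tail n v \<delta>"
    by (simp add: upper_tail_def X_def field_simps exp_minus flip: of_real_mult)
  have theta: "theta n v = 1 + of_real n * integral {0..1} (theta_integrand n v) -
      of_real (exp n) / (2 * X) * Gamma (of_real n + v + 1)"
    by (simp add: theta_def X_def theta_integrand_def [abs_def])
  have peak: "odd_part_integral \<delta> (peak_integrand n v) = G1 - G2"
    unfolding odd_part_integral_def G1_def G2_def using assms n
    by (intro integral_unique has_integral_diff has_integral_peak_integrand) auto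
  show ?thesis
    unfolding theta lower_tail_def Gamma G0_def[symmetric] peak \<open>integral {0..1} _ = G0 + G1\<close> by (simp add: field_simps)
qed

section \<open>Asymptotic estimates\<close>

lemma bigo_of_real_if_norm_le:
  fixes f :: "'a \<Rightarrow> 'b::real_normed_field"
  assumes "\<forall>\<^sub>F x in F. norm (f x) \<le> C * g x" and "g \<in> O[F](h)"
  shows "f \<in> O[F](\<lambda>x. of_real (h x))"
proof -
  have "(\<lambda>x. norm (f x)) \<in> O[F](g)"
    using assms(1) by (intro bigoI[of _ "\<bar>C\<bar>"])
      (auto elim!: eventually_mono intro: order_trans[OF _ abs_ge_self] simp flip: abs_mult)
  then have "(\<lambda>x. norm (f x)) \<in> O[F](h)"
    using assms(2) by (rule landau_o.big_trans)
  then have "(\<lambda>x. norm (f x)) \<in> O[F](\<lambda>x. norm (of_real (h x) :: 'b))"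
    by simp
  then show ?thesis
    by (rule landau_o.big.norm_iff[THEN iffD1])
qed

lemma bigo_inverse_power_if_norm_le:
  fixes f :: "real \<Rightarrow> complex"
  assumes "\<forall>\<^sub>F n in at_top. norm (f n) \<le> C * g n" and "g \<in> O(\<lambda>n. 1 / n ^ R)"
  shows "f \<in> O[at_top](\<lambda>n. 1 / of_real n ^ R)"
  using bigo_of_real_if_norm_le[OF assms] by simp

lemma ln_one_minus_less:
  assumes "0 < d" "d < (1::real)"
  shows "ln (1 - d) < - d"
proof -
  have "1 - d < (1 - d/2)^2"
    using assms by (simp add: power2_eq_square algebra_simps)
  then have "ln (1 - d) < ln ((1 - d/2)^2)"
    using assms by (intro ln_less_cancel_iff[THEN iffD2]) auto
  also have "\<dots> = 2 * ln (1 - d/2)"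
    using assms by (simp add: ln_realpow)
  also have "\<dots> \<le> - d"
    using ln_one_minus_pos_upper_bound[of "d/2"] assms by simp
  finally show ?thesis .
qed

(* The exponent is norm v (1 - s) + (n - norm v) (1 - s + ln s), and 1 - s + ln s increases on ]0, 1]. *)
lemma norm_theta_integrand_le:
  assumes "0 < \<delta>" "\<delta> < 1" "norm v < n" "0 \<le> s" "s \<le> 1 - \<delta>"
  shows "norm (theta_integrand n v s) \<le> exp (norm v + (n - norm v) * (\<delta> + ln (1 - \<delta>)))"
proof (cases "s = 0")
  case True
  then show ?thesis
    using assms(3) abs_Re_le_cmod[of v] by (simp add: theta_integrand_def)
next
  case False
  define m where "m = n - norm v"
  have m: "m > 0" "m \<le> n + Re v"
    using assms(3) abs_Re_le_cmod[of v] by (auto simp: m_def)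
  have s: "0 < s" "s \<le> 1 - \<delta>"
    using False assms by auto
  have "ln (s / (1 - \<delta>)) \<le> s / (1 - \<delta>) - 1"
    using s assms by (intro ln_le_minus_one) auto
  moreover have "(s - (1 - \<delta>)) * 1 \<le> (s - (1 - \<delta>)) * (1 - \<delta>)"
    using s assms by (intro mult_left_mono_neg) auto
  then have "(s - (1 - \<delta>)) / (1 - \<delta>) \<le> s - (1 - \<delta>)"
    using assms by (simp add: divide_le_eq)
  ultimately have "1 - s + ln s \<le> \<delta> + ln (1 - \<delta>)"
    using s assms by (simp add: ln_div diff_divide_distrib)
  then have "m * (1 - s + ln s) \<le> m * (\<delta> + ln (1 - \<delta>))"
    using m by (intro mult_left_mono) auto
  moreover have "norm v * (1 - s) \<le> norm v"
    using s by (simp add: mult_left_le)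
  moreover have "norm (theta_integrand n v s) = exp (n * (1 - s)) * s powr (n + Re v)"
    using s by (simp add: theta_integrand_def norm_mult norm_powr_real_powr)
  moreover have "s powr (n + Re v) \<le> s powr m"
    using s assms m by (intro powr_mono') auto
  moreover have "exp (n * (1 - s)) * s powr m = exp (norm v * (1 - s) + m * (1 - s + ln s))"
    using s by (simp add: powr_def m_def algebra_simps flip: exp_add)
  ultimately show ?thesis
    unfolding m_def by (smt (verit) exp_gt_zero exp_le_cancel_iff mult_left_mono)
qed

lemma norm_integral_theta_integrand_lower:
  assumes "0 < \<delta>" "\<delta> < 1" "norm v < n"
  shows "norm (integral {0..1-\<delta>} (theta_integrand n v)) \<le> exp (norm v + (n - norm v) * (\<delta> + ln (1 - \<delta>)))"
proof -
  have "n + Re v > 0"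
    using assms(3) abs_Re_le_cmod[of v] by linarith
  then have "theta_integrand n v integrable_on cbox 0 (1-\<delta>)"
    using integrable_continuous_interval[OF continuous_on_theta_integrand[of n v "1-\<delta>"]]
    by (simp add: cbox_interval)
  then have "norm (integral (cbox 0 (1-\<delta>)) (theta_integrand n v)) \<le>
      exp (norm v + (n - norm v) * (\<delta> + ln (1 - \<delta>))) * Henstock_Kurzweil_Integration.content (cbox 0 (1-\<delta>))"
    using norm_theta_integrand_le[OF assms]
    by (intro has_integral_bound[OF _ has_integral_integral[THEN iffD1]]) auto
  also have "\<dots> \<le> exp (norm v + (n - norm v) * (\<delta> + ln (1 - \<delta>)))"
    using assms by (simp add: mult_left_le)
  finally show ?thesis
    by simp
qed

(* By concavity ln t <= ln T + (t - T) / T, so beyond T the integrand decays like exp (-c t)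
   as soon as n + Re v <= (1 - c) T. *)
lemma norm_gamma_integrand_le:
  assumes "0 < T" "T \<le> t" "0 < n + Re v" "n + Re v \<le> (1 - c) * T"
  shows "norm (gamma_integrand n v t) \<le> exp ((n + Re v) * ln T - T + c * T) * exp (- c * t)"
proof -
  define a where "a = n + Re v"
  have t: "t > 0"
    using assms by simp
  have "ln (t / T) \<le> t / T - 1"
    using t assms by (intro ln_le_minus_one) simp
  then have "ln t - ln T \<le> (t - T) / T"
    using t assms by (simp add: ln_div diff_divide_distrib)
  then have "a * (ln t - ln T) \<le> (a / T) * (t - T)"
    using assms(3) by (auto simp: a_def intro: order_trans[OF mult_left_mono])
  also have "\<dots> \<le> (1 - c) * (t - T)"
    using assms by (intro mult_right_mono) (auto simp: a_def divide_le_eq mult.commute)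
  finally have "a * ln t - t \<le> a * ln T - T + c * T - c * t"
    by (simp add: algebra_simps)
  moreover have "norm (gamma_integrand n v t) = exp (a * ln t - t)"
    using t by (simp add: gamma_integrand_def norm_divide norm_powr_real_powr a_def powr_def exp_diff)
  ultimately show ?thesis
    by (simp add: a_def algebra_simps flip: exp_add)
qed

lemma norm_integral_gamma_integrand_upper:
  assumes "n > 0" "\<delta> > 0" "n + Re v > 0" "Re v \<le> n * \<delta> / 2"
  shows "norm (integral {n * (1 + \<delta>)..} (gamma_integrand n v)) \<le>
           exp ((n + Re v) * ln (n * (1 + \<delta>)) - n * (1 + \<delta>)) / (\<delta> / (2 * (1 + \<delta>)))"
proof -
  define T where "T = n * (1 + \<delta>)"
  define c where "c = \<delta> / (2 * (1 + \<delta>))"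
  define K where "K = exp ((n + Re v) * ln T - T + c * T)"
  have T: "T > 0" and c: "c > 0"
    using assms by (auto simp: T_def c_def)
  have dominant: "((\<lambda>t. K * exp (- c * t)) has_integral (K * (exp (- c * T) / c))) {T..}"
    using c by (intro has_integral_mult_right has_integral_exp_minus_to_infinity)
  have "n + Re v \<le> n + n * \<delta> / 2"
    using assms by simp
  also have "\<dots> = (1 - c) * T"
    using assms by (simp add: T_def c_def field_simps)
  finally have "norm (integral {T..} (gamma_integrand n v)) \<le> integral {T..} (\<lambda>t. K * exp (- c * t))"
    using gamma_integrand_integrable_on_tail[OF assms(3) T] dominant norm_gamma_integrand_le[OF T _ assms(3)]
    by (intro integral_norm_bound_integral) (auto simp: K_def)
  also have "\<dots> = exp ((n + Re v) * ln T - T) / c"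
    using integral_unique[OF dominant] by (simp add: K_def flip: exp_add)
  finally show ?thesis
    by (simp add: T_def c_def)
qed

lemma lower_tail_bigo:
  assumes "0 < \<delta>" "\<delta> < 1"
  shows "(\<lambda>n. lower_tail n v \<delta>) \<in> O[at_top](\<lambda>n. 1 / of_real n ^ R)"
proof (rule bigo_inverse_power_if_norm_le)
  define \<beta> where "\<beta> = \<delta> + ln (1 - \<delta>)"
  have "\<beta> < 0"
    using ln_one_minus_less[of \<delta>] assms by (simp add: \<beta>_def)
  then show "(\<lambda>n. n / 2 * exp (norm v + (n - norm v) * \<beta>)) \<in> O(\<lambda>n. 1 / n ^ R)"
    by real_asymp
  show "\<forall>\<^sub>F n in at_top. norm (lower_tail n v \<delta>) \<le> 1 * (n / 2 * exp (norm v + (n - norm v) * \<beta>))"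
    using eventually_gt_at_top[of "norm v"]
  proof eventually_elim
    case (elim n)
    then have "n > 0"
      using norm_ge_zero[of v] by linarith
    then show ?case
      using norm_integral_theta_integrand_lower[OF assms elim]
      by (simp add: lower_tail_def norm_mult \<beta>_def mult_left_mono)
  qed
qed

lemma upper_tail_bigo:
  assumes "0 < \<delta>"
  shows "(\<lambda>n. upper_tail n v \<delta>) \<in> O[at_top](\<lambda>n. 1 / of_real n ^ R)"
proof (rule bigo_inverse_power_if_norm_le)
  define c where "c = \<delta> / (2 * (1 + \<delta>))"
  define \<beta> where "\<beta> = ln (1 + \<delta>) - \<delta>"
  have "\<beta> < 0" "c > 0"
    using ln_add_one_self_less_self[of \<delta>] assms by (simp_all add: \<beta>_def c_def)
  then show "(\<lambda>n. exp (Re v * ln (1 + \<delta>) + \<beta> * n) / (2 * c)) \<in> O(\<lambda>n. 1 / n ^ R)"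
    by real_asymp
  show "\<forall>\<^sub>F n in at_top. norm (upper_tail n v \<delta>) \<le> 1 * (exp (Re v * ln (1 + \<delta>) + \<beta> * n) / (2 * c))"
    using eventually_gt_at_top[of "norm v + 2 * norm v / \<delta>"]
  proof eventually_elim
    case (elim n)
    have n: "n > 0" "n + Re v > 0"
      using elim assms abs_Re_le_cmod[of v] by (smt (verit) divide_nonneg_pos norm_ge_zero)+
    have "2 * norm v \<le> n * \<delta>"
      using elim assms by (smt (verit) divide_le_eq norm_ge_zero)
    then have "Re v \<le> n * \<delta> / 2"
      using abs_Re_le_cmod[of v] by linarith
    note tail = norm_integral_gamma_integrand_upper[OF n(1) assms n(2) this]
    have "norm (upper_tail n v \<delta>) = exp n / (2 * exp ((n + Re v) * ln n)) *
        norm (integral {n * (1 + \<delta>)..} (gamma_integrand n v))"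
      by (simp add: upper_tail_def norm_mult norm_divide)
    also have "\<dots> \<le> exp n / (2 * exp ((n + Re v) * ln n)) *
        (exp ((n + Re v) * ln (n * (1 + \<delta>)) - n * (1 + \<delta>)) / c)"
      using tail by (intro mult_left_mono) (auto simp: c_def)
    also have "\<dots> = exp (n - (n + Re v) * ln n + ((n + Re v) * ln (n * (1 + \<delta>)) - n * (1 + \<delta>))) / (2 * c)"
      by (simp add: exp_add exp_diff field_simps)
    also have "n - (n + Re v) * ln n + ((n + Re v) * ln (n * (1 + \<delta>)) - n * (1 + \<delta>)) =
        Re v * ln (1 + \<delta>) + \<beta> * n"
      using n assms ln_mult[of n "1 + \<delta>"] by (simp add: \<beta>_def algebra_simps)
    finally show ?case by simp
  qed
qed

lemma sum_lessThan_even_odd: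
  fixes f :: "nat \<Rightarrow> 'a::comm_monoid_add"
  shows "(\<Sum>i<2*n. f i) = (\<Sum>j<n. f (2*j)) + (\<Sum>j<n. f (2*j+1))"
  by (induction n) (simp_all add: algebra_simps)

lemma peak_approx_odd_part:
  "peak_approx (2*M) n v (-t) - peak_approx (2*M) n v t =
     (\<Sum>k<2*M. \<Sum>j<3*M. of_real (n^k / fact k) * fps_nth (peak_fps v k) (2*j+1) * (-2) *
                          of_real (t^(2*j+1) * exp (- (n/2) * t^2)))"
proof -
  have "peak_poly (2*M) v k (-t) - peak_poly (2*M) v k t =
      (\<Sum>j<3*M. fps_nth (peak_fps v k) (2*j+1) * (-2) * of_real (t^(2*j+1)))" for k
  proof -
    have "peak_poly (2*M) v k (-t) - peak_poly (2*M) v k t =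
        (\<Sum>i<2*(3*M). fps_nth (peak_fps v k) i * (of_real (-t) ^ i - of_real t ^ i))"
      by (simp add: peak_poly_def sum_subtractf algebra_simps)
    also have "\<dots> = (\<Sum>j<3*M. fps_nth (peak_fps v k) (2*j+1) * (-2) * of_real (t^(2*j+1)))"
      unfolding sum_lessThan_even_odd by (simp add: power_mult mult.assoc)
    finally show ?thesis .
  qed
  note poly_odd = this
  have "peak_approx (2*M) n v (-t) - peak_approx (2*M) n v t = of_real (exp (- n * t^2 / 2)) *
      (\<Sum>k<2*M. of_real (n^k / fact k) * (peak_poly (2*M) v k (-t) - peak_poly (2*M) v k t))"
    by (simp add: peak_approx_def sum_subtractf right_diff_distrib)
  also have "\<dots> = (\<Sum>k<2*M. \<Sum>j<3*M. of_real (n^k / fact k) * fps_nth (peak_fps v k) (2*j+1) * (-2) *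
                          of_real (t^(2*j+1) * exp (- (n/2) * t^2)))"
    unfolding poly_odd sum_distrib_left by (intro sum.cong refl) (simp add: algebra_simps)
  finally show ?thesis .
qed

lemma has_integral_peak_approx_odd_part:
  assumes "n > 0" "\<delta> \<ge> 0"
  shows "((\<lambda>t. peak_approx (2*M) n v (-t) - peak_approx (2*M) n v t) has_integral
           - (2 / of_real n) * (\<Sum>k<2*M. \<Sum>j<3*M. peak_coeff v k j * of_real (n^k / n^j) *
                                 of_real (1 - poisson_cdf j (n / 2 * \<delta>^2)))) {0..\<delta>}"
proof -
  have "((\<lambda>t. peak_approx (2*M) n v (-t) - peak_approx (2*M) n v t) has_integral
      (\<Sum>k<2*M. \<Sum>j<3*M. of_real (n^k / fact k) * fps_nth (peak_fps v k) (2*j+1) * (-2) *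
         of_real (fact j / (2 * (n/2)^(j+1)) * (1 - poisson_cdf j (n / 2 * \<delta>^2))))) {0..\<delta>}"
    unfolding peak_approx_odd_part using assms
    by (intro has_integral_sum finite_lessThan has_integral_mult_right has_integral_of_real
        has_integral_gauss_odd_moment) auto
  also have "(\<Sum>k<2*M. \<Sum>j<3*M. of_real (n^k / fact k) * fps_nth (peak_fps v k) (2*j+1) * (-2) *
         of_real (fact j / (2 * (n/2)^(j+1)) * (1 - poisson_cdf j (n / 2 * \<delta>^2)))) =
      - (2 / of_real n) * (\<Sum>k<2*M. \<Sum>j<3*M. peak_coeff v k j * of_real (n^k / n^j) *
                             of_real (1 - poisson_cdf j (n / 2 * \<delta>^2)))"
    unfolding sum_distrib_left
    using assms by (intro sum.cong refl) (simp add: peak_coeff_def power_divide field_simps)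
  finally show ?thesis .
qed

lemma sum_peak_coeff_initial:
  assumes "n \<noteq> 0"
  shows "(\<Sum>j<k+R. peak_coeff v k j * of_real (n^k / n^j)) = (\<Sum>r<R. peak_coeff v k (k + r) / of_real n ^ r)"
proof (induction R)
  case 0
  show ?case by (simp add: peak_coeff_eq_0)
next
  case (Suc R)
  with assms show ?case
    by (simp add: field_simps power_add)
qed

lemma peak_approx_integral_eq:
  assumes "n > 0" "\<delta> \<ge> 0" "R \<ge> 1" "M = R + 1"
  shows "1 + of_real n / 2 * odd_part_integral \<delta> (peak_approx (2*M) n v)
           - (\<Sum>r<R. rho r v / of_real n ^ r) =
         (\<Sum>k<2*M. \<Sum>j<3*M. peak_coeff v k j * of_real (n^k / n^j) *
                            (of_real (poisson_cdf j (n / 2 * \<delta>^2)) - (if k + R \<le> j then 1 else 0)))"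
proof -
  define c where "c k j = peak_coeff v k j * of_real (n^k / n^j)" for k j
  have initial: "(\<Sum>j<3*M. if j < k + R then c k j else 0) = (\<Sum>r<R. peak_coeff v k (k + r) / of_real n ^ r)"
    if "k < 2*M" for k
  proof -
    have "(\<Sum>j<3*M. if j < k + R then c k j else 0) = (\<Sum>j<k+R. c k j)"
      using that assms by (intro sum.mono_neutral_cong_right) auto
    then show ?thesis
      using sum_peak_coeff_initial[of n v k R] assms by (simp add: c_def)
  qed
  have "(\<Sum>r<R. rho r v / of_real n ^ r) =
      (\<Sum>r<R. ((if r = 0 then 1 else 0) - (\<Sum>k<2*M. peak_coeff v k (k + r))) / of_real n ^ r)"
    using assms(4) by (intro sum.cong refl) (simp add: rho_eq_sum_peak_coeff[of _ "2*M"])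
  also have "\<dots> = (\<Sum>r<R. (if r = 0 then 1 else 0) / of_real n ^ r) -
      (\<Sum>r<R. \<Sum>k<2*M. peak_coeff v k (k + r) / of_real n ^ r)"
    by (simp add: diff_divide_distrib sum_subtractf sum_divide_distrib)
  also have "(\<Sum>r<R. (if r = 0 then 1 else 0) / (of_real n :: complex) ^ r) = 1"
    using assms by (simp add: if_distrib[of "\<lambda>x. x / _"] cong: if_cong)
  also have "(\<Sum>r<R. \<Sum>k<2*M. peak_coeff v k (k + r) / of_real n ^ r) =
      (\<Sum>k<2*M. \<Sum>j<3*M. if j < k + R then c k j else 0)"
    by (simp add: initial sum.swap[of _ "{..<R}"])
  finally have rho_sum: "(\<Sum>r<R. rho r v / of_real n ^ r) = 1 - (\<Sum>k<2*M. \<Sum>j<3*M. if j < k + R then c k j else 0)" .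
  have "of_real n / 2 * odd_part_integral \<delta> (peak_approx (2*M) n v) =
      - (\<Sum>k<2*M. \<Sum>j<3*M. c k j * of_real (1 - poisson_cdf j (n / 2 * \<delta>^2)))"
    using integral_unique[OF has_integral_peak_approx_odd_part[OF assms(1,2)]] assms(1)
    by (simp add: odd_part_integral_def c_def)
  moreover have "(\<Sum>k<2*M. \<Sum>j<3*M. c k j) = (\<Sum>k<2*M. \<Sum>j<3*M. if j < k + R then c k j else 0) +
      (\<Sum>k<2*M. \<Sum>j<3*M. c k j * (if k + R \<le> j then 1 else 0))"
    unfolding sum.distrib [symmetric] by (intro sum.cong refl) auto
  ultimately show ?thesis
    unfolding rho_sum c_def[symmetric]
    by (simp add: algebra_simps sum_subtractf flip: sum_negf)
qed

lemma scaled_poisson_cdf_bigo: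
  fixes c :: complex
  assumes "\<delta> > 0"
  shows "(\<lambda>n. c * of_real (n^k / n^j) * of_real (poisson_cdf j (n / 2 * \<delta>^2))) \<in> O[at_top](\<lambda>n. 1 / of_real n ^ R)"
proof (rule bigo_inverse_power_if_norm_le)
  show "(\<lambda>n. n^k * ((real j + 1) * (1 + n / 2 * \<delta>^2)^j * exp (- (n / 2 * \<delta>^2)))) \<in> O(\<lambda>n. 1 / n ^ R)"
    using assms by real_asymp
  show "\<forall>\<^sub>F n in at_top. norm (c * of_real (n^k / n^j) * of_real (poisson_cdf j (n / 2 * \<delta>^2)))
      \<le> norm c * (n^k * ((real j + 1) * (1 + n / 2 * \<delta>^2)^j * exp (- (n / 2 * \<delta>^2))))"
    using eventually_ge_at_top[of 1]
  proof eventually_elim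
    case (elim n)
    define P where "P = poisson_cdf j (n / 2 * \<delta>^2)"
    have "n^k / n^j \<le> n^k"
      using elim by (simp add: divide_le_eq mult_le_cancel_left1 one_le_power)
    moreover have "0 \<le> P" "P \<le> (real j + 1) * (1 + n / 2 * \<delta>^2)^j * exp (- (n / 2 * \<delta>^2))"
      using elim by (auto simp: P_def intro: poisson_cdf_nonneg poisson_cdf_le)
    ultimately have "n^k / n^j * P \<le> n^k * ((real j + 1) * (1 + n / 2 * \<delta>^2)^j * exp (- (n / 2 * \<delta>^2)))"
      using elim by (intro mult_mono) auto
    moreover have "norm (c * of_real (n^k / n^j) * of_real P) = norm c * (n^k / n^j * P)"
      using elim \<open>0 \<le> P\<close> by (simp only: norm_mult norm_of_real mult.assoc) simp
    ultimately show ?case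
      unfolding P_def by (metis mult_left_mono norm_ge_zero)
  qed
qed

lemma power_ratio_bigo:
  fixes c :: complex
  assumes "k + R \<le> j"
  shows "(\<lambda>n. c * of_real (n^k / n^j)) \<in> O[at_top](\<lambda>n. 1 / of_real n ^ R)"
proof (rule bigo_inverse_power_if_norm_le)
  show "(\<lambda>n::real. 1 / n ^ R) \<in> O(\<lambda>n. 1 / n ^ R)"
    by simp
  show "\<forall>\<^sub>F n in at_top. norm (c * of_real (n^k / n^j)) \<le> norm c * (1 / n ^ R)"
    using eventually_ge_at_top[of 1]
  proof eventually_elim
    case (elim n)
    have "n^k / n^j = 1 / n^(j - k)"
      using elim assms by (simp add: power_diff)
    also have "\<dots> \<le> 1 / n^R"
      using elim assms by (intro divide_left_mono power_increasing) auto
    finally have "norm c * (n^k / n^j) \<le> norm c * (1 / n^R)"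
      by (rule mult_left_mono) simp
    moreover have "norm (c * of_real (n^k / n^j)) = norm c * (n^k / n^j)"
      using elim by (simp only: norm_mult norm_of_real) simp
    ultimately show ?case
      by simp
  qed
qed

lemma peak_approx_integral_expansion:
  assumes "0 < \<delta>" "R \<ge> 1" "M = R + 1"
  shows "(\<lambda>n. 1 + of_real n / 2 * odd_part_integral \<delta> (peak_approx (2*M) n v)
              - (\<Sum>r<R. rho r v / of_real n ^ r)) \<in> O[at_top](\<lambda>n. 1 / of_real n ^ R)"
proof -
  have "(\<lambda>n. peak_coeff v k j * of_real (n^k / n^j) *
      (of_real (poisson_cdf j (n / 2 * \<delta>^2)) - (if k + R \<le> j then 1 else 0))) \<in> O[at_top](\<lambda>n. 1 / of_real n ^ R)"
    for k j
  proof (cases "k + R \<le> j")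
    case True
    then show ?thesis
      using sum_in_bigo(2)[OF scaled_poisson_cdf_bigo[OF assms(1), of "peak_coeff v k j" k j R]
          power_ratio_bigo[OF True, of "peak_coeff v k j"]]
      by (simp add: algebra_simps)
  qed (use scaled_poisson_cdf_bigo[OF assms(1), of "peak_coeff v k j" k j R] in simp)
  then have "(\<lambda>n. \<Sum>k<2*M. \<Sum>j<3*M. peak_coeff v k j * of_real (n^k / n^j) *
      (of_real (poisson_cdf j (n / 2 * \<delta>^2)) - (if k + R \<le> j then 1 else 0))) \<in> O[at_top](\<lambda>n. 1 / of_real n ^ R)"
    by (intro big_sum_in_bigo)
  moreover have "\<forall>\<^sub>F n in at_top. 1 + of_real n / 2 * odd_part_integral \<delta> (peak_approx (2*M) n v)
      - (\<Sum>r<R. rho r v / of_real n ^ r) = (\<Sum>k<2*M. \<Sum>j<3*M. peak_coeff v k j * of_real (n^k / n^j) *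
      (of_real (poisson_cdf j (n / 2 * \<delta>^2)) - (if k + R \<le> j then 1 else 0)))"
    using eventually_gt_at_top[of 0] by eventually_elim (rule peak_approx_integral_eq, use assms in auto)
  ultimately show ?thesis
    by (simp add: landau_o.big.in_cong)
qed

lemma integrable_peak_odd_parts:
  assumes "\<delta> < 1"
  shows "(\<lambda>t. peak_integrand n v (-t) - peak_integrand n v t) integrable_on {0..\<delta>}"
    and "(\<lambda>t. peak_approx K n v (-t) - peak_approx K n v t) integrable_on {0..\<delta>}"
proof -
  have "continuous_on {0..\<delta>} (\<lambda>t. peak_integrand n v (s * t))" if "\<bar>s\<bar> = 1" for s
  proof -
    have "1 + s * t > 0" if "t \<in> {0..\<delta>}" for t
      using that assms \<open>\<bar>s\<bar> = 1\<close> by (auto simp: abs_if split: if_splits)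
    then show ?thesis
      unfolding peak_integrand_def by (intro continuous_intros) (auto, force)
  qed
  from this[of 1] this[of "-1"]
  show "(\<lambda>t. peak_integrand n v (-t) - peak_integrand n v t) integrable_on {0..\<delta>}"
    by (auto intro!: integrable_continuous_interval continuous_on_diff)
  show "(\<lambda>t. peak_approx K n v (-t) - peak_approx K n v t) integrable_on {0..\<delta>}"
    unfolding peak_approx_def peak_poly_def
    by (intro integrable_continuous_interval continuous_intros) auto
qed

lemma norm_peak_approx_integral_error_le:
  assumes "0 < \<delta>" "\<delta> < 1" "M \<ge> 1" "n \<ge> 1"
    and approx: "\<And>u. \<bar>u\<bar> \<le> \<delta> \<Longrightarrow>
      norm (peak_integrand n v u - peak_approx (2*M) n v u) \<le> C * n^(2*M) * \<bar>u\<bar>^(3*(2*M)) * exp (- n * u^2 / 4)"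
  shows "norm (odd_part_integral \<delta> (peak_integrand n v) - odd_part_integral \<delta> (peak_approx (2*M) n v))
           \<le> 2 * \<bar>C\<bar> * n^(2*M) * (fact (3*M - 1) / (2 * (n/4)^(3*M)))"
proof -
  define j where "j = 3*M - 1"
  have j: "2*j+1 < 3*(2*M)" "j + 1 = 3*M"
    using assms(3) by (simp_all add: j_def)
  define E where "E u = peak_integrand n v u - peak_approx (2*M) n v u" for u
  define h where "h t = 2 * \<bar>C\<bar> * n^(2*M) * (t^(2*j+1) * exp (- (n/4) * t^2))" for t
  have E_le: "norm (E u) \<le> \<bar>C\<bar> * n^(2*M) * (\<bar>u\<bar>^(2*j+1) * exp (- (n/4) * u^2))" if "\<bar>u\<bar> \<le> \<delta>" for u
  proof -
    have "\<bar>u\<bar>^(3*(2*M)) \<le> \<bar>u\<bar>^(2*j+1)"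
      using that assms j by (intro power_decreasing) auto
    then have "C * n^(2*M) * \<bar>u\<bar>^(3*(2*M)) * exp (- n * u^2 / 4) \<le>
        \<bar>C\<bar> * n^(2*M) * (\<bar>u\<bar>^(2*j+1) * exp (- (n/4) * u^2))"
      using assms(4) by (auto simp: mult.assoc intro!: mult_mono)
    then show ?thesis
      using approx[OF that] by (simp add: E_def)
  qed
  have "norm (odd_part_integral \<delta> (peak_integrand n v) - odd_part_integral \<delta> (peak_approx (2*M) n v))
      \<le> integral {0..\<delta>} h"
    unfolding odd_part_integral_def integral_diff[OF integrable_peak_odd_parts[OF assms(2)], symmetric]
  proof (rule integral_norm_bound_integral)
    show "(\<lambda>t. peak_integrand n v (-t) - peak_integrand n v t -
        (peak_approx (2*M) n v (-t) - peak_approx (2*M) n v t)) integrable_on {0..\<delta>}"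
      using integrable_peak_odd_parts[OF assms(2)] by (rule integrable_diff)
    show "h integrable_on {0..\<delta>}"
      unfolding h_def by (intro integrable_continuous_interval continuous_intros)
    fix t assume "t \<in> {0..\<delta>}"
    then have "norm (E (-t)) + norm (E t) \<le> h t"
      using E_le[of t] E_le[of "-t"] by (simp add: h_def)
    then show "norm (peak_integrand n v (-t) - peak_integrand n v t -
        (peak_approx (2*M) n v (-t) - peak_approx (2*M) n v t)) \<le> h t"
      using norm_triangle_ineq4[of "E (-t)" "E t"] by (simp add: E_def algebra_simps)
  qed
  also have "integral {0..\<delta>} h \<le> 2 * \<bar>C\<bar> * n^(2*M) * (fact j / (2 * (n/4)^(j+1)))"
    unfolding h_def using assms
    by (simp only: integral_mult_right) (intro mult_left_mono integral_gauss_odd_moment_le; simp)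
  finally show ?thesis
    using j(2) assms(3) by (simp add: j_def)
qed

lemma peak_approx_integral_error:
  assumes "0 < \<delta>" "\<delta> < 1" "M = R + 1"
    and approx: "\<And>n u. n \<ge> 1 \<Longrightarrow> \<bar>u\<bar> \<le> \<delta> \<Longrightarrow>
      norm (peak_integrand n v u - peak_approx (2*M) n v u) \<le> C * n^(2*M) * \<bar>u\<bar>^(3*(2*M)) * exp (- n * u^2 / 4)"
  shows "(\<lambda>n. of_real n / 2 * (odd_part_integral \<delta> (peak_integrand n v) - odd_part_integral \<delta> (peak_approx (2*M) n v)))
           \<in> O[at_top](\<lambda>n. 1 / of_real n ^ R)"
proof (rule bigo_inverse_power_if_norm_le)
  show "(\<lambda>n::real. 1 / n ^ R) \<in> O(\<lambda>n. 1 / n ^ R)"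
    by simp
  show "\<forall>\<^sub>F n in at_top. norm (of_real n / 2 *
      (odd_part_integral \<delta> (peak_integrand n v) - odd_part_integral \<delta> (peak_approx (2*M) n v)))
      \<le> (\<bar>C\<bar> * fact (3*M - 1) * 4^(3*M) / 2) * (1 / n ^ R)"
    using eventually_ge_at_top[of 1]
  proof eventually_elim
    case (elim n)
    have "3*M = (2*M+1) + R"
      using assms(3) by simp
    then have power: "n^(2*M+1) / n^(3*M) = 1 / n^R"
      using elim by (simp only: power_add) simp
    have "norm (of_real n / 2 * (odd_part_integral \<delta> (peak_integrand n v) - odd_part_integral \<delta> (peak_approx (2*M) n v)))
        \<le> n / 2 * (2 * \<bar>C\<bar> * n^(2*M) * (fact (3*M - 1) / (2 * (n/4)^(3*M))))"
      using mult_left_mono[OF norm_peak_approx_integral_error_le[OF assms(1,2) _ elim approx], of "n / 2"] elim assms(3)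
      by (simp add: norm_mult)
    also have "\<dots> = (\<bar>C\<bar> * fact (3*M - 1) * 4^(3*M) / 2) * (n^(2*M+1) / n^(3*M))"
      by (simp add: power_divide field_simps)
    finally show ?case
      unfolding power .
  qed
qed

theorem theorem4p2:
  fixes v :: complex and R :: nat
  assumes "R \<ge> 1"
  shows "(\<lambda>n::real. theta n v - (\<Sum>r<R. rho r v / (of_real n) ^ r))
           \<in> O[at_top](\<lambda>n. 1 / (of_real n) ^ R)"
proof -
  define M where "M = R + 1"
  obtain \<delta> C where \<delta>: "0 < \<delta>" "\<delta> < 1"
    and approx: "\<And>n u. n \<ge> 1 \<Longrightarrow> \<bar>u\<bar> \<le> \<delta> \<Longrightarrow>
      norm (peak_integrand n v u - peak_approx (2*M) n v u) \<le> C * n^(2*M) * \<bar>u\<bar>^(3*(2*M)) * exp (- n * u^2 / 4)"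
    using peak_approx_error[of v "2*M"] by blast
  have "\<forall>\<^sub>F n in at_top. theta n v - (\<Sum>r<R. rho r v / of_real n ^ r) =
      lower_tail n v \<delta> +
      of_real n / 2 * (odd_part_integral \<delta> (peak_integrand n v) - odd_part_integral \<delta> (peak_approx (2*M) n v)) +
      (1 + of_real n / 2 * odd_part_integral \<delta> (peak_approx (2*M) n v) - (\<Sum>r<R. rho r v / of_real n ^ r)) -
      upper_tail n v \<delta>"
    using eventually_gt_at_top[of "norm v"]
    by eventually_elim (simp add: theta_decomposition[OF \<delta>] algebra_simps)
  note decomposition = landau_o.big.in_cong[OF this]
  show ?thesis
    unfolding decomposition
    by (intro sum_in_bigo(2)[OF sum_in_bigo(1)[OF sum_in_bigo(1)]] lower_tail_bigo upper_tail_bigo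
        peak_approx_integral_error[OF \<delta> M_def approx] peak_approx_integral_expansion[OF \<delta>(1) assms M_def] \<delta>)
qed

end
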